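(* Let $n\ge2$, $C>0$, let $x\in\mathcal{K}_{S+}$ with $x_1\le\dots\le x_n$ and $x_n>x_1$, and let $\tilde{x}=x+\eta$ where either $\eta$ has i.i.d. Laplace entries with mean $0$ and scale $b>0$, or $\eta\sim\mathcal{N}(0,\sigma^2I_n)$ with $\sigma>0$. Then $$\alpha=\max_i\mathcal{B}(\pi_{S+})_i-\min_i\mathcal{B}(\pi_{S+})_i\ \ge\ \mathcal{B}((\pi_S)_+)_1-\mathcal{B}((\pi_S)_+)_n>0.$$
   Context: $\mathcal{K}_S=\{v\in\mathbb{R}^n:\sum_i v_i=C\}$, $\mathcal{K}_{S+}=\{v\in\mathcal{K}_S:v\ge0\}$; $\pi_S,\pi_{S+}$ are the Euclidean projections onto them. $(y)_+=\max\{y,0\}$ componentwise. $\mathcal{B}(\pi)=\mathbb{E}_{\tilde{x}}[\pi(\tilde{x})]-x$ for a map $\pi$, and $\mathcal{B}((\pi_S)_+)=\mathbb{E}[(\pi_S(\tilde{x}))_+]-x$. *)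

theory Defs
  imports "HOL-Probability.Probability"
begin

text \<open>Vectors in R^n are functions nat => real; only the coordinates 0..n-1 matter
  (paper index i corresponds to i-1 here).\<close>

definition KS :: "nat \<Rightarrow> real \<Rightarrow> (nat \<Rightarrow> real) set" where
  "KS n C = {v. (\<Sum>i<n. v i) = C}"

definition KSplus :: "nat \<Rightarrow> real \<Rightarrow> (nat \<Rightarrow> real) set" where
  "KSplus n C = {v \<in> KS n C. \<forall>i<n. 0 \<le> v i}"

definition sqdist :: "nat \<Rightarrow> (nat \<Rightarrow> real) \<Rightarrow> (nat \<Rightarrow> real) \<Rightarrow> real" where
  "sqdist n y z = (\<Sum>i<n. (y i - z i)^2)"

definition proj :: "nat \<Rightarrow> (nat \<Rightarrow> real) set \<Rightarrow> (nat \<Rightarrow> real) \<Rightarrow> (nat \<Rightarrow> real)" where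
  "proj n K y = (SOME z. z \<in> K \<and> (\<forall>w\<in>K. sqdist n y z \<le> sqdist n y w))"

definition piS :: "nat \<Rightarrow> real \<Rightarrow> (nat \<Rightarrow> real) \<Rightarrow> (nat \<Rightarrow> real)" where
  "piS n C = proj n (KS n C)"

definition piSplus :: "nat \<Rightarrow> real \<Rightarrow> (nat \<Rightarrow> real) \<Rightarrow> (nat \<Rightarrow> real)" where
  "piSplus n C = proj n (KSplus n C)"

definition pospart :: "((nat \<Rightarrow> real) \<Rightarrow> (nat \<Rightarrow> real)) \<Rightarrow> (nat \<Rightarrow> real) \<Rightarrow> (nat \<Rightarrow> real)" where
  "pospart p y = (\<lambda>i. max (p y i) 0)"

definition bias :: "nat \<Rightarrow> real measure \<Rightarrow> ((nat \<Rightarrow> real) \<Rightarrow> (nat \<Rightarrow> real)) \<Rightarrow> (nat \<Rightarrow> real) \<Rightarrow> nat \<Rightarrow> real" where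
  "bias n D p x i = (\<integral>\<eta>. p (\<lambda>j. x j + \<eta> j) i \<partial>(PiM {..<n} (\<lambda>_. D))) - x i"

definition laplace_measure :: "real \<Rightarrow> real measure" where
  "laplace_measure b = density lborel (\<lambda>t. ennreal (exp (- \<bar>t\<bar> / b) / (2 * b)))"

definition gaussian_measure :: "real \<Rightarrow> real measure" where
  "gaussian_measure \<sigma> = density lborel (\<lambda>t. ennreal (normal_density 0 \<sigma> t))"

end

theory Submission
  imports Defs
begin

text \<open>The simplex projection clips at a data-dependent level,
  \<open>\<pi>\<^sub>S\<^sub>+(y) = (y - \<tau>(y))\<^sub>+\<close>, while the clipped hyperplane projection clips at the
  mean shift \<open>m(y) = (\<Sum>y - C)/n\<close>, and always \<open>m \<le> \<tau>\<close>.  Exchanging the noise coordinates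
  \<open>1\<close> and \<open>n\<close>, which preserves the law of \<open>\<eta>\<close>, writes either bias gap \<open>B\<^sub>1 - B\<^sub>n\<close> as
  \<open>\<delta> - E[gain]\<close>, where \<open>\<delta> = x\<^sub>n - x\<^sub>1\<close> and the gain is the increase of the clipped first
  coordinate when mass \<open>\<delta>\<close> is moved from coordinate \<open>n\<close> to coordinate \<open>1\<close> of \<open>y = x + \<eta>\<close>.
  Under this transfer \<open>m\<close> is unchanged and \<open>\<tau>\<close> cannot decrease while it stays below \<open>y\<^sub>1\<close>,
  so the simplex gain is pointwise at most the hyperplane gain; this orders the gaps.  The
  hyperplane gain is at most \<open>\<delta>\<close>, and strictly less when \<open>y\<^sub>1 < m(y)\<close>, an event of
  positive probability because the noise is unbounded below.\<close>

section \<open>Projections onto the hyperplane and the simplex\<close>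

definition simplex_excess :: "nat \<Rightarrow> (nat \<Rightarrow> real) \<Rightarrow> real \<Rightarrow> real" where
  "simplex_excess n y t = (\<Sum>i<n. max (y i - t) 0)"

text \<open>The simplex projection is \<open>y \<mapsto> (y - \<tau>)\<^sub>+\<close> for the unique \<open>\<tau>\<close> with
  \<open>simplex_excess n y \<tau> = C\<close>; taking \<open>\<tau>\<close> as the largest shifted average over nonempty index
  sets gives its existence and measurability at once.\<close>

definition simplex_threshold :: "nat \<Rightarrow> real \<Rightarrow> (nat \<Rightarrow> real) \<Rightarrow> real" where
  "simplex_threshold n C y =
     Max ((\<lambda>S. ((\<Sum>i\<in>S. y i) - C) / real (card S)) ` {S. S \<subseteq> {..<n} \<and> S \<noteq> {}})"

definition hyperplane_shift :: "nat \<Rightarrow> real \<Rightarrow> (nat \<Rightarrow> real) \<Rightarrow> real" where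
  "hyperplane_shift n C y = ((\<Sum>i<n. y i) - C) / real n"

lemma finite_nonempty_index_sets: "finite {S. S \<subseteq> {..<n::nat} \<and> S \<noteq> {}}"
  by (rule finite_subset[of _ "Pow {..<n}"]) auto

lemma simplex_threshold_ge:
  assumes "S \<subseteq> {..<n}" "S \<noteq> {}"
  shows "(\<Sum>i\<in>S. y i) - C \<le> real (card S) * simplex_threshold n C y"
proof -
  have "0 < real (card S)"
    using assms finite_subset[OF assms(1) finite_lessThan] by (simp add: card_gt_0_iff)
  moreover have "((\<Sum>i\<in>S. y i) - C) / real (card S) \<le> simplex_threshold n C y"
    unfolding simplex_threshold_def using assms finite_nonempty_index_sets by (intro Max_ge) auto
  ultimately show ?thesis by (simp add: divide_le_eq mult.commute)
qed

lemma simplex_threshold_attained: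
  assumes "0 < n"
  obtains S where "S \<subseteq> {..<n}" "S \<noteq> {}"
    "(\<Sum>i\<in>S. y i) - C = real (card S) * simplex_threshold n C y"
proof -
  have "{S. S \<subseteq> {..<n} \<and> S \<noteq> {}} \<noteq> {}"
    using assms by (auto intro!: exI[of _ "{0}"])
  then have "simplex_threshold n C y
      \<in> (\<lambda>S. ((\<Sum>i\<in>S. y i) - C) / real (card S)) ` {S. S \<subseteq> {..<n} \<and> S \<noteq> {}}"
    unfolding simplex_threshold_def using finite_nonempty_index_sets by (intro Max_in) auto
  then obtain S where S: "S \<subseteq> {..<n}" "S \<noteq> {}"
    and eq: "simplex_threshold n C y = ((\<Sum>i\<in>S. y i) - C) / real (card S)"
    by auto
  have "0 < real (card S)"
    using S finite_subset[OF S(1) finite_lessThan] by (simp add: card_gt_0_iff)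
  with eq have "(\<Sum>i\<in>S. y i) - C = real (card S) * simplex_threshold n C y"
    by (simp add: field_simps)
  with S show thesis by (rule that)
qed

lemma hyperplane_shift_le_simplex_threshold:
  assumes "0 < n"
  shows "hyperplane_shift n C y \<le> simplex_threshold n C y"
  using simplex_threshold_ge[of "{..<n}" n y C] assms
  by (simp add: hyperplane_shift_def divide_le_eq mult.commute lessThan_empty_iff)

lemma simplex_excess_pos_imp_above:
  assumes "0 < simplex_excess n y t"
  obtains i where "i < n" "t < y i"
proof -
  have "\<not> (\<forall>i<n. y i \<le> t)"
  proof
    assume "\<forall>i<n. y i \<le> t"
    then have "simplex_excess n y t = 0"
      unfolding simplex_excess_def by (intro sum.neutral) auto
    with assms show False by simp
  qed
  with that show thesis by (auto simp: not_le)
qed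

lemma simplex_excess_strict_antimono:
  assumes "t < s" "i < n" "t < y i"
  shows "simplex_excess n y s < simplex_excess n y t"
  unfolding simplex_excess_def
proof (rule sum_strict_mono_ex1)
  show "\<exists>a\<in>{..<n}. max (y a - s) 0 < max (y a - t) 0"
    using assms by (intro bexI[of _ i]) auto
qed (use assms in \<open>auto simp: max_def\<close>)

lemma simplex_excess_threshold:
  assumes "0 < n" "0 < C"
  shows "simplex_excess n y (simplex_threshold n C y) = C"
proof -
  let ?t = "simplex_threshold n C y"
  obtain S where S: "S \<subseteq> {..<n}" "S \<noteq> {}" "(\<Sum>i\<in>S. y i) - C = real (card S) * ?t"
    using simplex_threshold_attained[OF assms(1)] by blast
  have "C = (\<Sum>i\<in>S. y i - ?t)"
    using S(3) by (simp add: sum_subtractf)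
  also have "\<dots> \<le> (\<Sum>i\<in>S. max (y i - ?t) 0)"
    by (intro sum_mono) auto
  also have "\<dots> \<le> simplex_excess n y ?t"
    unfolding simplex_excess_def using S(1) by (intro sum_mono2) auto
  finally have ge: "C \<le> simplex_excess n y ?t" .
  define A where "A = {i. i < n \<and> ?t < y i}"
  have "simplex_excess n y ?t = (\<Sum>i\<in>A. max (y i - ?t) 0)"
    unfolding simplex_excess_def A_def by (rule sum.mono_neutral_right) auto
  also have "\<dots> = (\<Sum>i\<in>A. y i - ?t)"
    unfolding A_def by (intro sum.cong) auto
  also have "\<dots> = (\<Sum>i\<in>A. y i) - real (card A) * ?t"
    by (simp add: sum_subtractf)
  also have "\<dots> \<le> C"
  proof -
    have "0 < simplex_excess n y ?t" using ge assms(2) by linarith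
    then obtain i where "i < n" "?t < y i" by (rule simplex_excess_pos_imp_above)
    then have "A \<noteq> {}" unfolding A_def by blast
    moreover have "A \<subseteq> {..<n}" unfolding A_def by auto
    ultimately show ?thesis using simplex_threshold_ge[of A n y C] by simp
  qed
  finally show ?thesis using ge by simp
qed

lemma simplex_threshold_unique:
  assumes "0 < n" "0 < C" "simplex_excess n y t = C"
  shows "t = simplex_threshold n C y"
proof (rule ccontr)
  let ?t = "simplex_threshold n C y"
  have excess: "simplex_excess n y ?t = C"
    by (rule simplex_excess_threshold[OF assms(1,2)])
  assume "t \<noteq> ?t"
  then consider "t < ?t" | "?t < t" by linarith
  then show False
  proof cases
    case 1
    have "0 < simplex_excess n y ?t" using excess assms(2) by simp
    then obtain i where "i < n" "?t < y i" by (rule simplex_excess_pos_imp_above)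
    with 1 have "simplex_excess n y ?t < simplex_excess n y t"
      by (intro simplex_excess_strict_antimono) auto
    with excess assms(3) show False by simp
  next
    case 2
    have "0 < simplex_excess n y t" using assms(2,3) by simp
    then obtain i where "i < n" "t < y i" by (rule simplex_excess_pos_imp_above)
    with 2 have "simplex_excess n y t < simplex_excess n y ?t"
      by (intro simplex_excess_strict_antimono) auto
    with excess assms(3) show False by simp
  qed
qed

lemma simplex_threshold_cong:
  assumes "\<And>i. i < n \<Longrightarrow> y i = z i"
  shows "simplex_threshold n C y = simplex_threshold n C z"
proof -
  have "(\<Sum>i\<in>S. y i) = (\<Sum>i\<in>S. z i)" if "S \<subseteq> {..<n}" for S
    using that assms by (intro sum.cong) auto
  then show ?thesis
    unfolding simplex_threshold_def by (intro arg_cong[where f = Max] image_cong) auto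
qed

lemma simplex_threshold_permute:
  assumes "p permutes {..<n}" "0 < n" "0 < C"
  shows "simplex_threshold n C (y \<circ> p) = simplex_threshold n C y"
proof -
  have "simplex_excess n (y \<circ> p) t = simplex_excess n y t" for t
    unfolding simplex_excess_def using sum.permute[OF assms(1), of "\<lambda>i. max (y i - t) 0"]
    by (simp add: comp_def)
  then show ?thesis
    using simplex_excess_threshold[OF assms(2,3), of y]
    by (intro simplex_threshold_unique[OF assms(2,3), symmetric]) simp
qed

lemma hyperplane_shift_permute:
  assumes "p permutes {..<n}"
  shows "hyperplane_shift n C (y \<circ> p) = hyperplane_shift n C y"
  unfolding hyperplane_shift_def using sum.permute[OF assms, of y] by simp

lemma borel_measurable_simplex_threshold:
  assumes "\<And>i. i < n \<Longrightarrow> f i \<in> borel_measurable M"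
  shows "(\<lambda>\<omega>. simplex_threshold n C (\<lambda>i. f i \<omega>)) \<in> borel_measurable M"
  unfolding simplex_threshold_def
  using assms by (intro borel_measurable_Max[OF finite_nonempty_index_sets]
      borel_measurable_divide borel_measurable_diff borel_measurable_sum) auto

lemma proj_eqI:
  assumes z: "z \<in> K" and variational: "\<And>w. w \<in> K \<Longrightarrow> 0 \<le> (\<Sum>i<n. (w i - z i) * (z i - y i))"
    and i: "i < n"
  shows "proj n K y i = z i"
proof -
  have pythagoras: "sqdist n y z + (\<Sum>i<n. (w i - z i)^2) \<le> sqdist n y w" if "w \<in> K" for w
  proof -
    have "sqdist n y w = sqdist n y z + (\<Sum>i<n. (w i - z i)^2)
        + 2 * (\<Sum>i<n. (w i - z i) * (z i - y i))"
      unfolding sqdist_def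
      by (simp add: sum.distrib[symmetric] sum_distrib_left power2_eq_square algebra_simps)
    then show ?thesis using variational[OF that] by linarith
  qed
  have nearest: "sqdist n y z \<le> sqdist n y w" if "w \<in> K" for w
    using pythagoras[OF that] sum_nonneg[of "{..<n}" "\<lambda>i. (w i - z i)^2"] by simp
  define p where "p = proj n K y"
  have p: "p \<in> K" "sqdist n y p \<le> sqdist n y z"
    using someI[where P = "\<lambda>p. p \<in> K \<and> (\<forall>w\<in>K. sqdist n y p \<le> sqdist n y w)", of z]
      z nearest unfolding p_def proj_def by auto
  then have "(\<Sum>i<n. (p i - z i)^2) = 0"
    using pythagoras[of p] sum_nonneg[of "{..<n}" "\<lambda>i. (p i - z i)^2"] by simp
  then show ?thesis
    using i sum_nonneg_eq_0_iff[of "{..<n}" "\<lambda>i. (p i - z i)^2"] unfolding p_def by simp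
qed

lemma piSplus_apply:
  assumes "0 < n" "0 < C" "i < n"
  shows "piSplus n C y i = max (y i - simplex_threshold n C y) 0"
  unfolding piSplus_def
proof (rule proj_eqI[OF _ _ assms(3)])
  let ?t = "simplex_threshold n C y"
  have excess: "(\<Sum>i<n. max (y i - ?t) 0) = C"
    using simplex_excess_threshold[OF assms(1,2)] unfolding simplex_excess_def .
  then show "(\<lambda>i. max (y i - ?t) 0) \<in> KSplus n C"
    unfolding KSplus_def KS_def by auto
  fix w assume w: "w \<in> KSplus n C"
  have "(\<Sum>i<n. - ?t * (w i - max (y i - ?t) 0))
      \<le> (\<Sum>i<n. (w i - max (y i - ?t) 0) * (max (y i - ?t) 0 - y i))"
  proof (rule sum_mono)
    fix i assume "i \<in> {..<n}"
    then have "0 \<le> w i" using w unfolding KSplus_def by auto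
    then show "- ?t * (w i - max (y i - ?t) 0) \<le> (w i - max (y i - ?t) 0) * (max (y i - ?t) 0 - y i)"
      by (cases "?t < y i") (auto simp: algebra_simps intro: mult_left_mono)
  qed
  also have "(\<Sum>i<n. - ?t * (w i - max (y i - ?t) 0))
      = - ?t * ((\<Sum>i<n. w i) - (\<Sum>i<n. max (y i - ?t) 0))"
    by (simp only: sum_distrib_left[symmetric] sum_subtractf)
  also have "\<dots> = 0"
    using w excess unfolding KSplus_def KS_def by simp
  finally show "0 \<le> (\<Sum>i<n. (w i - max (y i - ?t) 0) * (max (y i - ?t) 0 - y i))" .
qed

lemma piS_apply:
  assumes "0 < n" "i < n"
  shows "piS n C y i = y i - hyperplane_shift n C y"
  unfolding piS_def
proof (rule proj_eqI[OF _ _ assms(2)])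
  let ?t = "hyperplane_shift n C y"
  have sum_shifted: "(\<Sum>i<n. y i - ?t) = C"
    using assms(1) by (simp add: sum_subtractf hyperplane_shift_def)
  then show "(\<lambda>i. y i - ?t) \<in> KS n C"
    unfolding KS_def by simp
  fix w assume w: "w \<in> KS n C"
  have "(\<Sum>i<n. (w i - (y i - ?t)) * ((y i - ?t) - y i)) = (\<Sum>i<n. - ?t * (w i - (y i - ?t)))"
    by (intro sum.cong) (simp_all add: algebra_simps)
  also have "\<dots> = - ?t * ((\<Sum>i<n. w i) - (\<Sum>i<n. y i - ?t))"
    by (simp only: sum_distrib_left[symmetric] sum_subtractf)
  also have "\<dots> = 0"
    using w sum_shifted unfolding KS_def by simp
  finally show "0 \<le> (\<Sum>i<n. (w i - (y i - ?t)) * ((y i - ?t) - y i))"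
    by simp
qed

section \<open>Moving mass between two coordinates\<close>

lemma sum_lessThan_split_pair:
  fixes g :: "nat \<Rightarrow> real"
  assumes "i < n" "j < n" "i \<noteq> j"
  shows "(\<Sum>k<n. g k) = g i + g j + (\<Sum>k\<in>{..<n} - {i, j}. g k)"
proof -
  have "(\<Sum>k<n. g k) = g i + (\<Sum>k\<in>{..<n} - {i}. g k)"
    using assms by (simp add: sum.remove)
  also have "(\<Sum>k\<in>{..<n} - {i}. g k) = g j + (\<Sum>k\<in>{..<n} - {i} - {j}. g k)"
    using assms by (simp add: sum.remove)
  finally show ?thesis by (simp add: Diff_insert2[symmetric] insert_commute add.assoc)
qed

lemma hyperplane_shift_fun_upd_pair:
  assumes "i < n" "j < n" "i \<noteq> j" "a + b = y i + y j"
  shows "hyperplane_shift n C (y(i := a, j := b)) = hyperplane_shift n C y"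
  using sum_lessThan_split_pair[OF assms(1-3), of y]
    sum_lessThan_split_pair[OF assms(1-3), of "y(i := a, j := b)"] assms
  by (simp add: hyperplane_shift_def)

lemma simplex_excess_transfer_ge:
  assumes "i < n" "j < n" "i \<noteq> j" "0 \<le> \<delta>" "t < y i"
  shows "simplex_excess n y t \<le> simplex_excess n (y(i := y i + \<delta>, j := y j - \<delta>)) t"
proof -
  let ?y' = "y(i := y i + \<delta>, j := y j - \<delta>)"
  have "(\<Sum>k\<in>{..<n} - {i, j}. max (?y' k - t) 0) = (\<Sum>k\<in>{..<n} - {i, j}. max (y k - t) 0)"
    by (intro sum.cong) auto
  moreover have "max (y i - t) 0 + max (y j - t) 0 \<le> max (?y' i - t) 0 + max (?y' j - t) 0"
    using assms by (auto simp: max_def)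
  ultimately show ?thesis
    unfolding simplex_excess_def
    using sum_lessThan_split_pair[OF assms(1-3), of "\<lambda>k. max (y k - t) 0"]
      sum_lessThan_split_pair[OF assms(1-3), of "\<lambda>k. max (?y' k - t) 0"]
    by linarith
qed

lemma simplex_threshold_le_after_transfer:
  assumes "0 < C" "i < n" "j < n" "i \<noteq> j" "0 \<le> \<delta>"
    and below: "simplex_threshold n C (y(i := y i + \<delta>, j := y j - \<delta>)) < y i"
  shows "simplex_threshold n C y \<le> simplex_threshold n C (y(i := y i + \<delta>, j := y j - \<delta>))"
proof (rule ccontr)
  let ?y' = "y(i := y i + \<delta>, j := y j - \<delta>)"
  let ?t = "simplex_threshold n C y" and ?t' = "simplex_threshold n C ?y'"
  have n: "0 < n" using assms(2) by simp
  assume "\<not> ?t \<le> ?t'"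
  then have "simplex_excess n y ?t < simplex_excess n y ?t'"
    using assms(2) below by (intro simplex_excess_strict_antimono) auto
  also have "\<dots> \<le> simplex_excess n ?y' ?t'"
    using assms below by (intro simplex_excess_transfer_ge) auto
  finally show False
    using simplex_excess_threshold[OF n assms(1), of y] simplex_excess_threshold[OF n assms(1), of ?y']
    by simp
qed

text \<open>Both thresholds lie above the transfer-invariant mean shift, and while the new threshold
  is below \<open>y i\<close> it is at least the old one.\<close>

lemma transfer_gain_simplex_le_hyperplane:
  assumes "0 < C" "i < n" "j < n" "i \<noteq> j" "0 \<le> \<delta>"
  shows "max (y i + \<delta> - simplex_threshold n C (y(i := y i + \<delta>, j := y j - \<delta>))) 0
           - max (y i - simplex_threshold n C y) 0
         \<le> max (y i + \<delta> - hyperplane_shift n C y) 0 - max (y i - hyperplane_shift n C y) 0"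
proof -
  let ?y' = "y(i := y i + \<delta>, j := y j - \<delta>)"
  let ?t = "simplex_threshold n C y" and ?t' = "simplex_threshold n C ?y'"
    and ?m = "hyperplane_shift n C y"
  have n: "0 < n" using assms(2) by simp
  have "?m \<le> ?t" by (rule hyperplane_shift_le_simplex_threshold[OF n])
  moreover have "?m \<le> ?t'"
    using hyperplane_shift_le_simplex_threshold[OF n, of C ?y']
      hyperplane_shift_fun_upd_pair[OF assms(2-4), of "y i + \<delta>" "y j - \<delta>" y C]
    by simp
  moreover have "?t' < y i \<Longrightarrow> ?t \<le> ?t'"
    by (rule simplex_threshold_le_after_transfer[OF assms])
  ultimately show ?thesis
    using assms(5) by (cases "?t' < y i") (auto simp: max_def)
qed

lemma offset_below_hyperplane_shift:
  assumes "i < n" "2 \<le> n"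
    and low: "\<eta> i < c + ((\<Sum>k<n. x k) - C - real n * x i) / (real n - 1)"
    and high: "\<And>k. k < n \<Longrightarrow> k \<noteq> i \<Longrightarrow> c \<le> \<eta> k"
  shows "x i + \<eta> i < hyperplane_shift n C (\<lambda>k. x k + \<eta> k)"
proof -
  have n1: "0 < real n - 1" using assms(2) by simp
  have "(\<Sum>k<n. \<eta> k) = \<eta> i + (\<Sum>k\<in>{..<n} - {i}. \<eta> k)"
    using assms(1) by (simp add: sum.remove)
  moreover have "(\<Sum>k\<in>{..<n} - {i}. c) \<le> (\<Sum>k\<in>{..<n} - {i}. \<eta> k)"
    using high by (intro sum_mono) auto
  moreover have "(\<Sum>k\<in>{..<n} - {i}. c) = (real n - 1) * c"
    using assms(1) by simp
  moreover have "(real n - 1) * \<eta> i < (real n - 1) * c + ((\<Sum>k<n. x k) - C - real n * x i)"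
  proof -
    have "(real n - 1) * \<eta> i < (real n - 1) * (c + ((\<Sum>k<n. x k) - C - real n * x i) / (real n - 1))"
      by (rule mult_strict_left_mono[OF low n1])
    also have "\<dots> = (real n - 1) * c + ((\<Sum>k<n. x k) - C - real n * x i)"
      using n1 by (simp add: distrib_left)
    finally show ?thesis .
  qed
  ultimately have "real n * (x i + \<eta> i) < (\<Sum>k<n. x k + \<eta> k) - C"
    by (simp add: sum.distrib algebra_simps)
  then show ?thesis
    using assms(2) unfolding hyperplane_shift_def by (simp add: field_simps)
qed

section \<open>Biases under exchangeable noise\<close>

lemma offset_transpose_eq:
  assumes "i \<noteq> j"
  shows "(\<lambda>k. x k + \<eta> (Transposition.transpose i j k))
    = ((\<lambda>k. x k + \<eta> k)(i := x j + \<eta> i, j := x i + \<eta> j)) \<circ> Transposition.transpose i j"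
  using assms by (auto simp: fun_eq_iff Transposition.transpose_def)

lemma bias_piSplus:
  assumes "0 < C" "i < n"
  shows "bias n D (piSplus n C) x i
    = (\<integral>\<eta>. max (x i + \<eta> i - simplex_threshold n C (\<lambda>k. x k + \<eta> k)) 0 \<partial>\<Pi>\<^sub>M k\<in>{..<n}. D) - x i"
  unfolding bias_def using piSplus_apply[of n C i] assms by simp

lemma bias_pospart_piS:
  assumes "i < n"
  shows "bias n D (pospart (piS n C)) x i
    = (\<integral>\<eta>. max (x i + \<eta> i - hyperplane_shift n C (\<lambda>k. x k + \<eta> k)) 0 \<partial>\<Pi>\<^sub>M k\<in>{..<n}. D) - x i"
  unfolding bias_def pospart_def using piS_apply[of n i C] assms by simp

lemma integral_pos_if_pos_on:
  fixes f :: "'a \<Rightarrow> real"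
  assumes f: "integrable M f" and nonneg: "\<And>x. x \<in> space M \<Longrightarrow> 0 \<le> f x"
    and A: "A \<in> sets M" "0 < emeasure M A" and pos: "\<And>x. x \<in> A \<Longrightarrow> 0 < f x"
  shows "0 < integral\<^sup>L M f"
proof (rule ccontr)
  assume "\<not> 0 < integral\<^sup>L M f"
  moreover have "0 \<le> integral\<^sup>L M f"
    using nonneg by (intro integral_nonneg_AE AE_I2)
  ultimately have "AE x in M. f x = 0"
    using integral_nonneg_eq_0_iff_AE[OF f] nonneg by auto
  then have "AE x in M. x \<notin> A"
    by eventually_elim (use pos in fastforce)
  then have "emeasure M A = 0"
    using A(1) AE_iff_measurable[of A M "\<lambda>x. x \<notin> A"] sets.sets_into_space[OF A(1)] by auto
  with A(2) show False by simp
qed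

locale real_noise = prob_space D for D :: "real measure" +
  assumes sets_eq_borel: "sets D = sets borel"
    and integrable_id: "integrable D (\<lambda>t. t)"
    and emeasure_lessThan_pos: "0 < emeasure D {..<a}"
begin

abbreviation noise :: "nat \<Rightarrow> (nat \<Rightarrow> real) measure" where
  "noise n \<equiv> \<Pi>\<^sub>M k\<in>{..<n}. D"

lemma prob_space_noise: "prob_space (noise n)"
  by (simp add: prob_space_PiM prob_space_axioms)

lemma measurable_noise_component: "i < n \<Longrightarrow> (\<lambda>\<eta>. \<eta> i) \<in> measurable (noise n) D"
  by (rule measurable_component_singleton) simp

lemma borel_measurable_noise_component [measurable (raw)]:
  "i < n \<Longrightarrow> (\<lambda>\<eta>. \<eta> i) \<in> borel_measurable (noise n)"
  using measurable_noise_component measurable_cong_sets[OF refl sets_eq_borel] by blast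

lemma integrable_noise_component: "i < n \<Longrightarrow> integrable (noise n) (\<lambda>\<eta>. \<eta> i)"
  using integrable_distr_eq[OF measurable_noise_component, of i n "\<lambda>t. t"]
    distr_PiM_component[of "{..<n}" "\<lambda>_. D" i] prob_space_axioms integrable_id
  by simp

lemma integrable_noise_const: "integrable (noise n) (\<lambda>_. c)"
proof -
  interpret N: prob_space "noise n" by (rule prob_space_noise)
  show ?thesis by simp
qed

lemma integral_noise_permute:
  fixes f :: "(nat \<Rightarrow> real) \<Rightarrow> real"
  assumes p: "p permutes {..<n}" and f: "f \<in> borel_measurable (noise n)"
  shows "(\<integral>\<eta>. f (\<lambda>k\<in>{..<n}. \<eta> (p k)) \<partial>noise n) = (\<integral>\<eta>. f \<eta> \<partial>noise n)"
proof -
  have p_maps: "p \<in> {..<n} \<rightarrow> {..<n}" and p_inj: "inj_on p {..<n}"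
    using permutes_in_image[OF p] permutes_inj_on[OF p] by auto
  have reindex_measurable: "(\<lambda>\<eta>. \<lambda>k\<in>{..<n}. \<eta> (p k)) \<in> measurable (noise n) (noise n)"
    using p_maps by (intro measurable_restrict measurable_noise_component) auto
  have "distr (noise n) (noise n) (\<lambda>\<eta>. \<lambda>k\<in>{..<n}. \<eta> (p k)) = noise n"
    using distr_PiM_reindex[OF _ p_inj p_maps, of "\<lambda>_. D"] prob_space_axioms by simp
  then show ?thesis
    using integral_distr[OF reindex_measurable f] by simp
qed

lemma obtain_atLeast_pos:
  obtains c where "0 < emeasure D {c..}"
proof (rule ccontr)
  assume "\<not> thesis"
  with that have "emeasure D {- real k..} = 0" for k
    by (metis not_gr_zero)
  then have "emeasure D (\<Union>k. {- real k..}) = 0"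
    by (intro emeasure_UN_eq_0) (auto simp: sets_eq_borel)
  moreover have "(\<Union>k. {- real k..}) = space D"
    using sets_eq_imp_space_eq[OF sets_eq_borel] by (auto simp: minus_le_iff intro: real_arch_simple)
  ultimately show False
    using emeasure_space_1 by simp
qed

lemma emeasure_noise_PiE_pos:
  assumes "\<And>i. i < n \<Longrightarrow> F i \<in> sets borel" "\<And>i. i < n \<Longrightarrow> 0 < emeasure D (F i)"
  shows "0 < emeasure (noise n) (\<Pi>\<^sub>E i\<in>{..<n}. F i)"
proof -
  interpret product_sigma_finite "\<lambda>_::nat. D" ..
  have "emeasure (noise n) (\<Pi>\<^sub>E i\<in>{..<n}. F i) = (\<Prod>i<n. emeasure D (F i))"
    using assms(1) by (intro emeasure_PiM) (auto simp: sets_eq_borel)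
  also have "\<dots> > 0"
    using assms(2) by (auto simp: zero_less_iff_neq_zero)
  finally show ?thesis .
qed

lemma integrable_clipped_simplex:
  assumes "0 < C" "i < n" and y: "\<And>k. k < n \<Longrightarrow> (\<lambda>\<eta>. y \<eta> k) \<in> borel_measurable (noise n)"
  shows "integrable (noise n) (\<lambda>\<eta>. max (y \<eta> i - simplex_threshold n C (y \<eta>)) 0)"
proof -
  interpret N: prob_space "noise n" by (rule prob_space_noise)
  have [measurable]: "(\<lambda>\<eta>. simplex_threshold n C (y \<eta>)) \<in> borel_measurable (noise n)"
    using borel_measurable_simplex_threshold[of n "\<lambda>k \<eta>. y \<eta> k"] y by simp
  have "max (y \<eta> i - simplex_threshold n C (y \<eta>)) 0 \<le> C" for \<eta>
    using member_le_sum[of i "{..<n}" "\<lambda>k. max (y \<eta> k - simplex_threshold n C (y \<eta>)) 0"]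
      simplex_excess_threshold[of n C "y \<eta>"] assms(1,2)
    unfolding simplex_excess_def by simp
  then show ?thesis
    using assms(2) y by (intro N.integrable_const_bound[where B = C]) auto
qed

lemma integrable_clipped_simplex_offset:
  assumes "0 < C" "i < n"
  shows "integrable (noise n) (\<lambda>\<eta>. max (x i + \<eta> i - simplex_threshold n C (\<lambda>k. x k + \<eta> k)) 0)"
  using integrable_clipped_simplex[OF assms, of "\<lambda>\<eta> k. x k + \<eta> k"] by simp

lemma integrable_clipped_simplex_swapped:
  assumes "0 < C" "i < n" "j < n" "i \<noteq> j"
  shows "integrable (noise n)
    (\<lambda>\<eta>. max (x j + \<eta> i - simplex_threshold n C ((\<lambda>k. x k + \<eta> k)(i := x j + \<eta> i, j := x i + \<eta> j))) 0)"
proof -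
  let ?y' = "\<lambda>\<eta>. (\<lambda>k. x k + \<eta> k)(i := x j + \<eta> i, j := x i + \<eta> j)"
  have "(\<lambda>\<eta>. ?y' \<eta> k) \<in> borel_measurable (noise n)" if "k < n" for k
    using that assms by (cases "k = i"; cases "k = j") simp_all
  from integrable_clipped_simplex[OF assms(1,2), of ?y', OF this] show ?thesis
    using assms by simp
qed

lemma integrable_hyperplane_shift:
  "integrable (noise n) (\<lambda>\<eta>. hyperplane_shift n C (\<lambda>k. x k + \<eta> k))"
  unfolding hyperplane_shift_def
  by (intro integrable_divide Bochner_Integration.integrable_diff Bochner_Integration.integrable_sum
      Bochner_Integration.integrable_add integrable_noise_component integrable_noise_const) auto

lemma integrable_clipped_hyperplane:
  "i < n \<Longrightarrow> integrable (noise n) (\<lambda>\<eta>. max (a + \<eta> i - hyperplane_shift n C (\<lambda>k. x k + \<eta> k)) 0)"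
  by (intro integrable_max Bochner_Integration.integrable_diff Bochner_Integration.integrable_add
      integrable_noise_component integrable_noise_const integrable_hyperplane_shift) auto

lemma integral_noise_transpose:
  fixes F :: "(nat \<Rightarrow> real) \<Rightarrow> real"
  assumes ij: "i < n" "j < n"
    and F_cong: "\<And>y z. (\<And>k. k < n \<Longrightarrow> y k = z k) \<Longrightarrow> F y = F z"
    and F_meas: "(\<lambda>\<eta>. F (\<lambda>k. x k + \<eta> k)) \<in> borel_measurable (noise n)"
  shows "(\<integral>\<eta>. max (x j + \<eta> j - F (\<lambda>k. x k + \<eta> k)) 0 \<partial>noise n)
       = (\<integral>\<eta>. max (x j + \<eta> i - F (\<lambda>k. x k + \<eta> (Transposition.transpose i j k))) 0 \<partial>noise n)"
proof -
  let ?p = "Transposition.transpose i j"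
  let ?f = "\<lambda>\<eta>. max (x j + \<eta> j - F (\<lambda>k. x k + \<eta> k)) 0"
  have p: "?p permutes {..<n}"
    using ij by (intro permutes_swap_id) auto
  have f: "?f \<in> borel_measurable (noise n)"
    using ij(2) F_meas by measurable
  have permuted: "?f (\<lambda>k\<in>{..<n}. \<eta> (?p k)) = max (x j + \<eta> i - F (\<lambda>k. x k + \<eta> (?p k))) 0" for \<eta>
  proof -
    have "F (\<lambda>k. x k + (\<lambda>k\<in>{..<n}. \<eta> (?p k)) k) = F (\<lambda>k. x k + \<eta> (?p k))"
      by (intro F_cong) simp
    then show ?thesis
      using ij by simp
  qed
  have "(\<integral>\<eta>. ?f \<eta> \<partial>noise n) = (\<integral>\<eta>. ?f (\<lambda>k\<in>{..<n}. \<eta> (?p k)) \<partial>noise n)"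
    by (rule integral_noise_permute[OF p f, symmetric])
  also have "\<dots> = (\<integral>\<eta>. max (x j + \<eta> i - F (\<lambda>k. x k + \<eta> (?p k))) 0 \<partial>noise n)"
    by (simp only: permuted)
  finally show ?thesis .
qed

lemma bias_piSplus_diff:
  assumes C: "0 < C" and ij: "i < n" "j < n" "i \<noteq> j"
  shows "bias n D (piSplus n C) x i - bias n D (piSplus n C) x j
    = (x j - x i)
      - (\<integral>\<eta>. max (x j + \<eta> i - simplex_threshold n C ((\<lambda>k. x k + \<eta> k)(i := x j + \<eta> i, j := x i + \<eta> j))) 0
             - max (x i + \<eta> i - simplex_threshold n C (\<lambda>k. x k + \<eta> k)) 0 \<partial>noise n)"
proof -
  let ?\<tau> = "simplex_threshold n C"
  let ?y = "\<lambda>\<eta> k. x k + \<eta> k"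
  let ?y' = "\<lambda>\<eta>. (?y \<eta>)(i := x j + \<eta> i, j := x i + \<eta> j)"
  have n: "0 < n" using ij by simp
  have p: "Transposition.transpose i j permutes {..<n}"
    using ij by (intro permutes_swap_id) auto
  have y_meas: "(\<lambda>\<eta>. ?y \<eta> k) \<in> borel_measurable (noise n)" if "k < n" for k
    using that by measurable
  have "(\<lambda>\<eta>. ?\<tau> (?y \<eta>)) \<in> borel_measurable (noise n)"
    using borel_measurable_simplex_threshold[of n "\<lambda>k \<eta>. x k + \<eta> k"] y_meas by simp
  then have "(\<integral>\<eta>. max (x j + \<eta> j - ?\<tau> (?y \<eta>)) 0 \<partial>noise n)
      = (\<integral>\<eta>. max (x j + \<eta> i - ?\<tau> (\<lambda>k. x k + \<eta> (Transposition.transpose i j k))) 0 \<partial>noise n)"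
    using ij by (intro integral_noise_transpose simplex_threshold_cong) auto
  also have "\<dots> = (\<integral>\<eta>. max (x j + \<eta> i - ?\<tau> (?y' \<eta>)) 0 \<partial>noise n)"
    unfolding offset_transpose_eq[OF ij(3)] simplex_threshold_permute[OF p n C] ..
  finally have swap: "(\<integral>\<eta>. max (x j + \<eta> j - ?\<tau> (?y \<eta>)) 0 \<partial>noise n)
      = (\<integral>\<eta>. max (x j + \<eta> i - ?\<tau> (?y' \<eta>)) 0 \<partial>noise n)" .
  show ?thesis
    using bias_piSplus[OF C ij(1), of D x] bias_piSplus[OF C ij(2), of D x] swap
      Bochner_Integration.integral_diff[OF integrable_clipped_simplex_swapped[OF C ij, where x = x]
        integrable_clipped_simplex_offset[OF C ij(1), where x = x]]
    by linarith
qed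

lemma bias_pospart_piS_diff:
  assumes ij: "i < n" "j < n" "i \<noteq> j"
  shows "bias n D (pospart (piS n C)) x i - bias n D (pospart (piS n C)) x j
    = (x j - x i)
      - (\<integral>\<eta>. max (x j + \<eta> i - hyperplane_shift n C (\<lambda>k. x k + \<eta> k)) 0
             - max (x i + \<eta> i - hyperplane_shift n C (\<lambda>k. x k + \<eta> k)) 0 \<partial>noise n)"
proof -
  let ?m = "hyperplane_shift n C"
  let ?y = "\<lambda>\<eta> k. x k + \<eta> k"
  have p: "Transposition.transpose i j permutes {..<n}"
    using ij by (intro permutes_swap_id) auto
  have shift_transpose: "?m (\<lambda>k. x k + \<eta> (Transposition.transpose i j k)) = ?m (?y \<eta>)" for \<eta>
    unfolding offset_transpose_eq[OF ij(3)] hyperplane_shift_permute[OF p]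
    using ij by (intro hyperplane_shift_fun_upd_pair) auto
  have "(\<lambda>\<eta>. ?m (?y \<eta>)) \<in> borel_measurable (noise n)"
    by (rule borel_measurable_integrable[OF integrable_hyperplane_shift])
  then have "(\<integral>\<eta>. max (x j + \<eta> j - ?m (?y \<eta>)) 0 \<partial>noise n)
      = (\<integral>\<eta>. max (x j + \<eta> i - ?m (\<lambda>k. x k + \<eta> (Transposition.transpose i j k))) 0 \<partial>noise n)"
    using ij by (intro integral_noise_transpose) (auto simp: hyperplane_shift_def)
  then have swap: "(\<integral>\<eta>. max (x j + \<eta> j - ?m (?y \<eta>)) 0 \<partial>noise n)
      = (\<integral>\<eta>. max (x j + \<eta> i - ?m (?y \<eta>)) 0 \<partial>noise n)"
    by (simp only: shift_transpose)
  show ?thesis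
    using bias_pospart_piS[OF ij(1), of D C x] bias_pospart_piS[OF ij(2), of D C x] swap
      Bochner_Integration.integral_diff
        [OF integrable_clipped_hyperplane[OF ij(1), where a = "x j" and C = C and x = x]
            integrable_clipped_hyperplane[OF ij(1), where a = "x i" and C = C and x = x]]
    by linarith
qed

lemma bias_gap_le:
  assumes C: "0 < C" and ij: "i < n" "j < n" "i \<noteq> j" and le: "x i \<le> x j"
  shows "bias n D (pospart (piS n C)) x i - bias n D (pospart (piS n C)) x j
    \<le> bias n D (piSplus n C) x i - bias n D (piSplus n C) x j"
proof -
  let ?\<tau> = "simplex_threshold n C" and ?m = "hyperplane_shift n C"
  let ?y = "\<lambda>\<eta> k. x k + \<eta> k"
  let ?y' = "\<lambda>\<eta>. (?y \<eta>)(i := x j + \<eta> i, j := x i + \<eta> j)"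
  have "max (x j + \<eta> i - ?\<tau> (?y' \<eta>)) 0 - max (x i + \<eta> i - ?\<tau> (?y \<eta>)) 0
      \<le> max (x j + \<eta> i - ?m (?y \<eta>)) 0 - max (x i + \<eta> i - ?m (?y \<eta>)) 0" for \<eta>
  proof -
    have "?y' \<eta> = (?y \<eta>)(i := ?y \<eta> i + (x j - x i), j := ?y \<eta> j - (x j - x i))"
      by (simp add: ac_simps)
    then show ?thesis
      using transfer_gain_simplex_le_hyperplane[OF C ij, of "x j - x i" "?y \<eta>"] le by simp
  qed
  then have "(\<integral>\<eta>. max (x j + \<eta> i - ?\<tau> (?y' \<eta>)) 0 - max (x i + \<eta> i - ?\<tau> (?y \<eta>)) 0 \<partial>noise n)
      \<le> (\<integral>\<eta>. max (x j + \<eta> i - ?m (?y \<eta>)) 0 - max (x i + \<eta> i - ?m (?y \<eta>)) 0 \<partial>noise n)"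
    using C ij
    by (intro integral_mono Bochner_Integration.integrable_diff integrable_clipped_simplex_swapped
        integrable_clipped_simplex_offset integrable_clipped_hyperplane)
  then show ?thesis
    using bias_piSplus_diff[OF C ij, of x] bias_pospart_piS_diff[OF ij, of C x] by linarith
qed

lemma bias_gap_pos:
  assumes ij: "i < n" "j < n" "i \<noteq> j" and lt: "x i < x j"
  shows "0 < bias n D (pospart (piS n C)) x i - bias n D (pospart (piS n C)) x j"
proof -
  interpret N: prob_space "noise n" by (rule prob_space_noise)
  let ?m = "\<lambda>\<eta>. hyperplane_shift n C (\<lambda>k. x k + \<eta> k)"
  define g where "g \<eta> = (x j - x i) - (max (x j + \<eta> i - ?m \<eta>) 0 - max (x i + \<eta> i - ?m \<eta>) 0)"
    for \<eta>
  have int_gain: "integrable (noise n) (\<lambda>\<eta>. max (x j + \<eta> i - ?m \<eta>) 0 - max (x i + \<eta> i - ?m \<eta>) 0)"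
    using ij by (intro Bochner_Integration.integrable_diff integrable_clipped_hyperplane)
  then have int_g: "integrable (noise n) g"
    unfolding g_def by (rule Bochner_Integration.integrable_diff[OF N.integrable_const])
  have bias_eq: "bias n D (pospart (piS n C)) x i - bias n D (pospart (piS n C)) x j = integral\<^sup>L (noise n) g"
    unfolding g_def bias_pospart_piS_diff[OF ij]
    using Bochner_Integration.integral_diff[OF N.integrable_const int_gain] by (simp add: N.prob_space)
  obtain c where c: "0 < emeasure D {c..}"
    by (rule obtain_atLeast_pos)
  define a where "a = c + ((\<Sum>k<n. x k) - C - real n * x i) / (real n - 1)"
  define A where "A = (\<Pi>\<^sub>E k\<in>{..<n}. if k = i then {..<a} else {c..})"
  have "0 < integral\<^sup>L (noise n) g"
  proof (rule integral_pos_if_pos_on[OF int_g])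
    show "0 \<le> g \<eta>" for \<eta>
      using lt unfolding g_def by (auto simp: max_def)
    show "A \<in> sets (noise n)"
      unfolding A_def by (intro sets_PiM_I_finite) (auto simp: sets_eq_borel)
    show "0 < emeasure (noise n) A"
      unfolding A_def using c emeasure_lessThan_pos by (intro emeasure_noise_PiE_pos) auto
    fix \<eta> assume "\<eta> \<in> A"
    then have "\<eta> k \<in> (if k = i then {..<a} else {c..})" if "k < n" for k
      using that unfolding A_def by (auto simp: PiE_iff)
    then have "\<eta> i < a" "\<And>k. k < n \<Longrightarrow> k \<noteq> i \<Longrightarrow> c \<le> \<eta> k"
      using ij(1) by force+
    then have "x i + \<eta> i < ?m \<eta>"
      using ij unfolding a_def by (intro offset_below_hyperplane_shift) auto
    then show "0 < g \<eta>"
      using lt unfolding g_def by (auto simp: max_def)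
  qed
  with bias_eq show ?thesis by simp
qed

end

section \<open>Laplace and Gaussian noise\<close>

lemma emeasure_density_pos:
  fixes g :: "real \<Rightarrow> real"
  assumes [measurable]: "g \<in> borel_measurable borel" and pos: "\<And>t. 0 < g t"
    and [measurable]: "A \<in> sets borel" and A: "emeasure lborel A \<noteq> 0"
  shows "0 < emeasure (density lborel (\<lambda>t. ennreal (g t))) A"
proof (rule ccontr)
  assume "\<not> ?thesis"
  then have "AE t in lborel. ennreal (g t) * indicator A t = 0"
    by (simp add: emeasure_density nn_integral_0_iff_AE)
  then have "AE t in lborel. t \<notin> A"
  proof eventually_elim
    case (elim t)
    show ?case using elim pos[of t] by (auto simp: indicator_def)
  qed
  with A show False
    by (simp add: AE_iff_measurable[OF _ refl])
qed

lemma emeasure_lborel_lessThan_ne_0: "emeasure lborel {..<a::real} \<noteq> 0"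
proof -
  have "emeasure lborel {a - 1<..<a} \<le> emeasure lborel {..<a}"
    by (intro emeasure_mono) auto
  then show ?thesis by auto
qed

lemma real_noise_gaussian:
  assumes "0 < \<sigma>"
  shows "real_noise (gaussian_measure \<sigma>)"
proof (intro real_noise.intro real_noise_axioms.intro)
  show "prob_space (gaussian_measure \<sigma>)"
    unfolding gaussian_measure_def using prob_space_normal_density[OF assms, of 0] by simp
  show "sets (gaussian_measure \<sigma>) = sets borel"
    unfolding gaussian_measure_def by simp
  show "integrable (gaussian_measure \<sigma>) (\<lambda>t. t)"
    unfolding gaussian_measure_def using integrable_normal_moment_nz_1[OF assms, of 0]
    by (subst integrable_density) auto
  show "0 < emeasure (gaussian_measure \<sigma>) {..<a}" for a
    unfolding gaussian_measure_def
    by (rule emeasure_density_pos) (auto simp: normal_density_pos[OF assms] emeasure_lborel_lessThan_ne_0)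
qed

text \<open>The Laplace density is the average of the exponential density and its reflection
  (off the null set \<open>{0}\<close>), which reduces its integrals to those of the exponential law.\<close>

lemma nn_integral_laplace_density:
  assumes b: "0 < b" and f [measurable]: "f \<in> borel_measurable borel"
  shows "(\<integral>\<^sup>+t. ennreal (exp (- \<bar>t\<bar> / b) / (2 * b)) * f \<bar>t\<bar> \<partial>lborel)
    = (\<integral>\<^sup>+t. ennreal (exponential_density (1 / b) t) * f t \<partial>lborel)"
proof -
  let ?e = "\<lambda>t. ennreal (exponential_density (1 / b) t) * f t"
  have "AE t in lborel. ennreal (exp (- \<bar>t\<bar> / b) / (2 * b)) * f \<bar>t\<bar>
      = ?e t * ennreal (1 / 2) + ?e (- t) * ennreal (1 / 2)"
    using AE_lborel_singleton[of 0]
  proof eventually_elim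
    case (elim t)
    then consider "0 < t" | "t < 0" by linarith
    then show ?case
    proof cases
      case 1
      have density: "exp (- \<bar>t\<bar> / b) / (2 * b) = exponential_density (1 / b) t * (1 / 2)"
        using 1 by (simp add: exponential_density_def field_simps)
      have "ennreal (exp (- \<bar>t\<bar> / b) / (2 * b)) = ennreal (exponential_density (1 / b) t) * ennreal (1 / 2)"
        unfolding density by (rule ennreal_mult'') simp
      moreover have "exponential_density (1 / b) (- t) = 0"
        using 1 by (simp add: exponential_density_def)
      ultimately show ?thesis
        using 1 by (simp add: mult_ac)
    next
      case 2
      have density: "exp (- \<bar>t\<bar> / b) / (2 * b) = exponential_density (1 / b) (- t) * (1 / 2)"
        using 2 by (simp add: exponential_density_def field_simps)
      have "ennreal (exp (- \<bar>t\<bar> / b) / (2 * b)) = ennreal (exponential_density (1 / b) (- t)) * ennreal (1 / 2)"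
        unfolding density by (rule ennreal_mult'') simp
      moreover have "exponential_density (1 / b) t = 0"
        using 2 by (simp add: exponential_density_def)
      ultimately show ?thesis
        using 2 by (simp add: mult_ac)
    qed
  qed
  then have "(\<integral>\<^sup>+t. ennreal (exp (- \<bar>t\<bar> / b) / (2 * b)) * f \<bar>t\<bar> \<partial>lborel)
      = (\<integral>\<^sup>+t. ?e t \<partial>lborel) * ennreal (1 / 2) + (\<integral>\<^sup>+t. ?e (- t) \<partial>lborel) * ennreal (1 / 2)"
    by (simp add: nn_integral_cong_AE nn_integral_add nn_integral_multc)
  also have "(\<integral>\<^sup>+t. ?e (- t) \<partial>lborel) = (\<integral>\<^sup>+t. ?e t \<partial>lborel)"
    using nn_integral_real_affine[of ?e "-1" 0] by simp
  also have "(\<integral>\<^sup>+t. ?e t \<partial>lborel) * ennreal (1 / 2) + (\<integral>\<^sup>+t. ?e t \<partial>lborel) * ennreal (1 / 2)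
      = (\<integral>\<^sup>+t. ?e t \<partial>lborel)"
  proof -
    have "ennreal (1 / 2) + ennreal (1 / 2) = 1"
      by (subst ennreal_plus[symmetric]) auto
    then show ?thesis
      by (simp only: distrib_left[symmetric] mult_1_right)
  qed
  finally show ?thesis .
qed

lemma real_noise_laplace:
  assumes b: "0 < b"
  shows "real_noise (laplace_measure b)"
proof (intro real_noise.intro real_noise_axioms.intro)
  have l: "0 < 1 / b" using b by simp
  have density_nonneg: "0 \<le> exp (- \<bar>t\<bar> / b) / (2 * b)" for t
    using b by simp
  show "prob_space (laplace_measure b)"
  proof
    have "emeasure (laplace_measure b) (space (laplace_measure b))
        = (\<integral>\<^sup>+t. ennreal (exp (- \<bar>t\<bar> / b) / (2 * b)) * (\<lambda>_. 1) \<bar>t\<bar> \<partial>lborel)"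
      unfolding laplace_measure_def by (simp add: emeasure_density)
    also have "\<dots> = (\<integral>\<^sup>+t. ennreal (exponential_density (1 / b) t * t ^ 0) \<partial>lborel)"
      by (subst nn_integral_laplace_density[OF b]) simp_all
    also have "\<dots> = 1"
      using nn_integral_erlang_ith_moment[OF l, of 0 0] by simp
    finally show "emeasure (laplace_measure b) (space (laplace_measure b)) = 1" .
  qed
  show "sets (laplace_measure b) = sets borel"
    unfolding laplace_measure_def by simp
  have "(\<integral>\<^sup>+t. ennreal (norm ((exp (- \<bar>t\<bar> / b) / (2 * b)) *\<^sub>R t)) \<partial>lborel)
      = (\<integral>\<^sup>+t. ennreal (exp (- \<bar>t\<bar> / b) / (2 * b)) * ennreal \<bar>t\<bar> \<partial>lborel)"
  proof (rule nn_integral_cong)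
    fix t :: real
    have norm_eq: "norm ((exp (- \<bar>t\<bar> / b) / (2 * b)) *\<^sub>R t) = exp (- \<bar>t\<bar> / b) / (2 * b) * \<bar>t\<bar>"
      using b by (simp add: abs_mult)
    show "ennreal (norm ((exp (- \<bar>t\<bar> / b) / (2 * b)) *\<^sub>R t))
        = ennreal (exp (- \<bar>t\<bar> / b) / (2 * b)) * ennreal \<bar>t\<bar>"
      unfolding norm_eq by (rule ennreal_mult[OF density_nonneg abs_ge_zero])
  qed
  also have "\<dots> = (\<integral>\<^sup>+t. ennreal (exponential_density (1 / b) t) * ennreal t \<partial>lborel)"
    by (rule nn_integral_laplace_density[OF b]) simp
  also have "\<dots> = (\<integral>\<^sup>+t. ennreal (exponential_density (1 / b) t * t ^ 1) \<partial>lborel)"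
  proof (rule nn_integral_cong)
    show "ennreal (exponential_density (1 / b) t) * ennreal t
        = ennreal (exponential_density (1 / b) t * t ^ 1)" for t
      by (cases "t < 0") (simp add: exponential_density_def, metis power_one_right ennreal_mult'' not_less)
  qed
  also have "\<dots> < \<infinity>"
    using nn_integral_erlang_ith_moment[OF l, of 0 1] by simp
  finally show "integrable (laplace_measure b) (\<lambda>t. t)"
    unfolding laplace_measure_def using density_nonneg
    by (subst integrable_density) (auto simp: integrable_iff_bounded)
  show "0 < emeasure (laplace_measure b) {..<a}" for a
    unfolding laplace_measure_def
    by (rule emeasure_density_pos) (use b in \<open>auto simp: emeasure_lborel_lessThan_ne_0\<close>)
qed

theorem mainTheorem7:
  fixes n :: nat and C b \<sigma> :: real and x :: "nat \<Rightarrow> real" and D :: "real measure"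
  assumes "n \<ge> 2" and "C > 0"
    and "x \<in> KSplus n C"
    and "\<forall>i j. i \<le> j \<longrightarrow> j < n \<longrightarrow> x i \<le> x j"
    and "x (n - 1) > x 0"
    and "(b > 0 \<and> D = laplace_measure b) \<or> (\<sigma> > 0 \<and> D = gaussian_measure \<sigma>)"
  shows "(Max ((\<lambda>i. bias n D (piSplus n C) x i) ` {..<n})
            - Min ((\<lambda>i. bias n D (piSplus n C) x i) ` {..<n}))
           \<ge> bias n D (pospart (piS n C)) x 0 - bias n D (pospart (piS n C)) x (n - 1)
       \<and> bias n D (pospart (piS n C)) x 0 - bias n D (pospart (piS n C)) x (n - 1) > 0"
proof -
  interpret real_noise D
    using assms(6) real_noise_laplace real_noise_gaussian by blast
  let ?B = "\<lambda>i. bias n D (piSplus n C) x i"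
  have ends: "0 < n" "n - 1 < n" "0 \<noteq> n - 1"
    using assms(1) by auto
  have "?B 0 \<le> Max (?B ` {..<n})" and "Min (?B ` {..<n}) \<le> ?B (n - 1)"
    using ends by (auto intro: Max_ge Min_le)
  then show ?thesis
    using bias_gap_le[OF assms(2) ends, of x] bias_gap_pos[OF ends, of x C] assms(5) by linarith
qed

end
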